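(* Let $H$ be a complex Hilbert space, let $K \in \mathcal{L}(H)$ be a positive compact operator, and let $\eta$ be a positive real number with $\eta > \|K\|/2$. Then the operator $W := \eta I - K$ satisfies the property $\mathcal{AN}^*$.
   Context: $\mathcal{L}(H)$ is the space of bounded linear operators on $H$; positive means $\langle Kx,x\rangle \ge 0$ for all $x\in H$. For a closed subspace $M \neq \{0\}$ of $H$ and $T \in \mathcal{L}(H)$, write $[T|_M] := \inf\{\|Tx\| : x \in M, \|x\|=1\}$; $T|_M$ satisfies $\mathcal{N}^*$ if there is $x_0 \in M$ with $\|x_0\|=1$ and $\|Tx_0\| = [T|_M]$. $T$ satisfies the property $\mathcal{AN}^*$ if $T|_M$ satisfies $\mathcal{N}^*$ for every closed subspace $M \neq \{0\}$ of $H$. *)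

theory Defs
  imports "HOL-Analysis.Analysis"
begin

text \<open>The distribution has no complex vector spaces, so we
  introduce a class: a real Banach space together with a complex scalar multiplication
  extending the real one and a complex inner product (linear in the first argument,
  conjugate symmetric) that induces the norm.\<close>

class chilbert = banach +
  fixes scaleC :: "complex \<Rightarrow> 'a \<Rightarrow> 'a"
    and cinner :: "'a \<Rightarrow> 'a \<Rightarrow> complex"
  assumes scaleC_of_real: "scaleC (complex_of_real r) x = r *\<^sub>R x"
    and scaleC_add_left: "scaleC (a + b) x = scaleC a x + scaleC b x"
    and scaleC_add_right: "scaleC a (x + y) = scaleC a x + scaleC a y"
    and scaleC_scaleC: "scaleC a (scaleC b x) = scaleC (a * b) x"
    and cinner_add_left: "cinner (x + y) z = cinner x z + cinner y z"
    and cinner_scaleC_left: "cinner (scaleC c x) y = c * cinner x y"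
    and cinner_commute: "cinner x y = cnj (cinner y x)"
    and cinner_self_norm: "cinner x x = complex_of_real ((norm x)\<^sup>2)"

definition bounded_clinear_op :: "('a::chilbert \<Rightarrow> 'a) \<Rightarrow> bool" where
  "bounded_clinear_op T \<longleftrightarrow>
     (\<forall>x y. T (x + y) = T x + T y) \<and> (\<forall>c x. T (scaleC c x) = scaleC c (T x)) \<and>
     (\<exists>B. \<forall>x. norm (T x) \<le> B * norm x)"

definition positive_op :: "('a::chilbert \<Rightarrow> 'a) \<Rightarrow> bool" where
  "positive_op K \<longleftrightarrow> (\<forall>x. Im (cinner (K x) x) = 0 \<and> Re (cinner (K x) x) \<ge> 0)"

definition compact_op :: "('a::chilbert \<Rightarrow> 'a) \<Rightarrow> bool" where
  "compact_op K \<longleftrightarrow> compact (closure (K ` {x. norm x \<le> 1}))"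

definition closed_csubspace :: "'a::chilbert set \<Rightarrow> bool" where
  "closed_csubspace M \<longleftrightarrow> 0 \<in> M \<and> (\<forall>x\<in>M. \<forall>y\<in>M. x + y \<in> M) \<and>
     (\<forall>c. \<forall>x\<in>M. scaleC c x \<in> M) \<and> closed M"

definition restr_inf :: "('a::chilbert \<Rightarrow> 'a) \<Rightarrow> 'a set \<Rightarrow> real" where
  "restr_inf T M = Inf ((\<lambda>x. norm (T x)) ` {x \<in> M. norm x = 1})"

definition N_star :: "('a::chilbert \<Rightarrow> 'a) \<Rightarrow> 'a set \<Rightarrow> bool" where
  "N_star T M \<longleftrightarrow> (\<exists>x0\<in>M. norm x0 = 1 \<and> norm (T x0) = restr_inf T M)"

definition AN_star :: "('a::chilbert \<Rightarrow> 'a) \<Rightarrow> bool" where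
  "AN_star T \<longleftrightarrow> (\<forall>M. closed_csubspace M \<and> M \<noteq> {0} \<longrightarrow> N_star T M)"

end

theory Submission
  imports Defs
begin

text \<open>Write \<open>W = \<eta> I - K\<close>. For a unit vector \<open>u\<close>,
  \<open>\<parallel>W u\<parallel>\<^sup>2 = \<eta>\<^sup>2 - 2 \<eta> \<langle>K u, u\<rangle> + \<parallel>K u\<parallel>\<^sup>2 \<le> \<eta>\<^sup>2\<close>, because a positive operator satisfies
  \<open>\<parallel>K u\<parallel>\<^sup>2 \<le> \<parallel>K\<parallel> \<langle>K u, u\<rangle>\<close> and \<open>\<parallel>K\<parallel> < 2 \<eta>\<close>. Hence the infimum \<open>m\<close> of \<open>\<parallel>W u\<parallel>\<close> over the unit
  sphere of a closed subspace \<open>M\<close> is at most \<open>\<eta>\<close>, and if \<open>m = \<eta>\<close> every unit vector is a minimiser.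
  If \<open>m < \<eta>\<close>, the parallelogram law for \<open>W u \<plusminus> W v\<close> together with \<open>\<parallel>W (u + v)\<parallel> \<ge> m \<parallel>u + v\<parallel>\<close>
  yields \<open>(\<eta>\<^sup>2 - m\<^sup>2) \<parallel>u - v\<parallel>\<^sup>2 \<le> 2 (\<parallel>W u\<parallel>\<^sup>2 - m\<^sup>2) + 2 (\<parallel>W v\<parallel>\<^sup>2 - m\<^sup>2) + 4 \<eta> \<parallel>K u - K v\<parallel>\<close>
  for unit vectors \<open>u, v \<in> M\<close>. So a minimising sequence along which \<open>K\<close> converges, which exists
  by compactness of \<open>K\<close>, is Cauchy, and its limit is a minimiser.\<close>


definition rinner :: "'a::chilbert \<Rightarrow> 'a \<Rightarrow> real" where
  "rinner x y = Re (cinner x y)"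

lemma rinner_add_left: "rinner (x + y) z = rinner x z + rinner y z"
  by (simp add: rinner_def cinner_add_left)

lemma rinner_commute: "rinner x y = rinner y x"
  unfolding rinner_def by (subst cinner_commute) simp

lemma rinner_add_right: "rinner z (x + y) = rinner z x + rinner z y"
  by (metis rinner_commute rinner_add_left)

lemma rinner_scaleR_left: "rinner (r *\<^sub>R x) y = r * rinner x y"
  by (simp add: rinner_def cinner_scaleC_left flip: scaleC_of_real)

lemma rinner_scaleR_right: "rinner y (r *\<^sub>R x) = r * rinner y x"
  by (metis rinner_commute rinner_scaleR_left)

lemma rinner_diff_left: "rinner (x - y) z = rinner x z - rinner y z"
  by (metis add_diff_cancel rinner_add_left eq_diff_eq)

lemma rinner_diff_right: "rinner z (x - y) = rinner z x - rinner z y"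
  by (metis rinner_commute rinner_diff_left)

lemma rinner_self: "rinner x x = (norm x)\<^sup>2"
  by (simp add: rinner_def cinner_self_norm)

lemma rinner_add_scaleR_expand:
  "rinner (a + t *\<^sub>R b) (c + t *\<^sub>R d) = rinner a c + t * (rinner a d + rinner b c) + t\<^sup>2 * rinner b d"
  by (simp add: rinner_add_left rinner_add_right rinner_scaleR_left rinner_scaleR_right
      power2_eq_square algebra_simps)

lemma norm_diff_sq: "(norm (x - y))\<^sup>2 = (norm x)\<^sup>2 - 2 * rinner x y + (norm (y::'a::chilbert))\<^sup>2"
  by (simp flip: rinner_self add: rinner_diff_left rinner_diff_right rinner_commute[of y x])

lemma parallelogram_law:
  "(norm (x + y))\<^sup>2 + (norm (x - y))\<^sup>2 = 2 * (norm x)\<^sup>2 + 2 * (norm (y::'a::chilbert))\<^sup>2"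
  by (simp flip: rinner_self add: rinner_add_left rinner_add_right rinner_diff_left rinner_diff_right
      rinner_commute[of y x])

lemma nonneg_quadratic_discriminant:
  fixes a b c :: real
  assumes nonneg: "\<And>t. 0 \<le> a + t * (2 * b) + t\<^sup>2 * c"
  shows "b\<^sup>2 \<le> a * c"
proof -
  have "c \<ge> 0"
  proof (rule ccontr)
    assume "\<not> c \<ge> 0"
    define t where "t = sqrt ((\<bar>a\<bar> + 1) / - c)"
    have "t\<^sup>2 = (\<bar>a\<bar> + 1) / - c"
      using \<open>\<not> c \<ge> 0\<close> by (simp add: t_def divide_nonneg_neg)
    then have "t\<^sup>2 * c = - (\<bar>a\<bar> + 1)"
      using \<open>\<not> c \<ge> 0\<close> by (simp add: field_simps)
    with nonneg[of t] nonneg[of "- t"] show False by simp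
  qed
  show ?thesis
  proof (cases "c = 0")
    case True
    have "b = 0"
    proof (rule ccontr)
      assume "b \<noteq> 0"
      with True nonneg[of "- (a + 1) / (2 * b)"] show False by (simp add: field_simps)
    qed
    with True show ?thesis by simp
  next
    case False
    with \<open>c \<ge> 0\<close> nonneg[of "- b / c"] show ?thesis
      by (simp add: power2_eq_square field_simps)
  qed
qed

lemma bounded_clinear_op_add: "bounded_clinear_op K \<Longrightarrow> K (x + y) = K x + K y"
  by (simp add: bounded_clinear_op_def)

lemma bounded_clinear_op_scaleC: "bounded_clinear_op K \<Longrightarrow> K (scaleC c x) = scaleC c (K x)"
  by (simp add: bounded_clinear_op_def)

lemma bounded_clinear_op_scaleR: "bounded_clinear_op K \<Longrightarrow> K (r *\<^sub>R x) = r *\<^sub>R K x"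
  by (simp add: bounded_clinear_op_scaleC flip: scaleC_of_real)

lemma bounded_clinear_op_imp_bounded_linear:
  assumes "bounded_clinear_op K"
  shows "bounded_linear K"
proof -
  obtain B where "\<And>x. norm (K x) \<le> B * norm x"
    using assms unfolding bounded_clinear_op_def by blast
  then show ?thesis
    by (intro bounded_linear_intro[where K = B])
      (auto simp: bounded_clinear_op_add[OF assms] bounded_clinear_op_scaleR[OF assms] mult.commute)
qed

lemma bounded_clinear_op_id: "bounded_clinear_op (\<lambda>x. x)"
  unfolding bounded_clinear_op_def by (auto intro: exI[of _ 1])

lemma positive_op_id: "positive_op (\<lambda>x. x)"
  by (simp add: positive_op_def cinner_self_norm)

lemma positive_op_rinner_nonneg: "positive_op K \<Longrightarrow> 0 \<le> rinner (K x) x"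
  by (simp add: positive_op_def rinner_def)

text \<open>A positive operator is self-adjoint: \<open>Im \<langle>K w, w\<rangle> = 0\<close> for \<open>w = u + v\<close> and
  \<open>w = u + i v\<close> forces \<open>\<langle>K u, v\<rangle> = conj \<langle>K v, u\<rangle>\<close>.\<close>

lemma positive_op_rinner_sym:
  assumes K: "bounded_clinear_op K" and P: "positive_op K"
  shows "rinner (K u) v = rinner (K v) u"
proof -
  have im0: "Im (cinner (K x) x) = 0" for x
    using P by (simp add: positive_op_def)
  have cinner_add_right: "cinner z (x + y) = cinner z x + cinner z y" for x y z :: 'a
    by (subst (1 2 3) cinner_commute) (simp add: cinner_add_left)
  have cross: "Im (cinner (K u) w + cinner (K w) u) = 0" for w
    using arg_cong[where f = Im, of "cinner (K (u + w)) (u + w)"] im0[of "u + w"] im0[of u] im0[of w]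
    by (simp add: bounded_clinear_op_add[OF K] cinner_add_left cinner_add_right)
  have "cinner (K u) (scaleC \<i> v) = - \<i> * cinner (K u) v"
    by (subst (1 2) cinner_commute) (simp add: cinner_scaleC_left)
  with cross[of "scaleC \<i> v"] show ?thesis
    by (simp add: rinner_def bounded_clinear_op_scaleC[OF K] cinner_scaleC_left)
qed

lemma positive_op_cauchy_schwarz:
  assumes K: "bounded_clinear_op K" and P: "positive_op K"
  shows "(rinner (K x) y)\<^sup>2 \<le> rinner (K x) x * rinner (K y) y"
proof (rule nonneg_quadratic_discriminant)
  fix t
  have "0 \<le> rinner (K (x + t *\<^sub>R y)) (x + t *\<^sub>R y)"
    by (rule positive_op_rinner_nonneg[OF P])
  also have "\<dots> = rinner (K x) x + t * (2 * rinner (K x) y) + t\<^sup>2 * rinner (K y) y"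
    by (simp add: bounded_clinear_op_add[OF K] bounded_clinear_op_scaleR[OF K]
        rinner_add_scaleR_expand positive_op_rinner_sym[OF K P, of y x])
  finally show "0 \<le> rinner (K x) x + t * (2 * rinner (K x) y) + t\<^sup>2 * rinner (K y) y" .
qed

lemma rinner_cauchy_schwarz: "\<bar>rinner x y\<bar> \<le> norm x * norm y"
proof -
  have "(rinner x y)\<^sup>2 \<le> (norm x * norm y)\<^sup>2"
    using positive_op_cauchy_schwarz[OF bounded_clinear_op_id positive_op_id, of x y]
    by (simp add: rinner_self power_mult_distrib)
  then show ?thesis
    using power2_le_imp_le[of "\<bar>rinner x y\<bar>" "norm x * norm y"] by simp
qed

lemma positive_op_norm_sq_le:
  assumes K: "bounded_clinear_op K" and P: "positive_op K"
  shows "(norm (K x))\<^sup>2 \<le> onorm K * rinner (K x) x"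
proof (cases "K x = 0")
  case True
  then show ?thesis
    using positive_op_rinner_nonneg[OF P, of x]
      onorm_pos_le[OF bounded_clinear_op_imp_bounded_linear[OF K]] by simp
next
  case False
  have "((norm (K x))\<^sup>2)\<^sup>2 = (rinner (K x) (K x))\<^sup>2"
    by (simp add: rinner_self)
  also have "\<dots> \<le> rinner (K x) x * rinner (K (K x)) (K x)"
    by (rule positive_op_cauchy_schwarz[OF K P])
  also have "rinner (K (K x)) (K x) \<le> norm (K (K x)) * norm (K x)"
    using rinner_cauchy_schwarz abs_le_D1 by blast
  also have "\<dots> \<le> onorm K * norm (K x) * norm (K x)"
    by (intro mult_right_mono onorm bounded_clinear_op_imp_bounded_linear[OF K]) simp
  finally have "((norm (K x))\<^sup>2)\<^sup>2 \<le> rinner (K x) x * (onorm K * (norm (K x))\<^sup>2)"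
    using positive_op_rinner_nonneg[OF P, of x]
    by (simp add: mult_left_mono power2_eq_square mult.assoc)
  then have "(norm (K x))\<^sup>2 * (norm (K x))\<^sup>2 \<le> (onorm K * rinner (K x) x) * (norm (K x))\<^sup>2"
    by (simp add: power2_eq_square[of "(norm (K x))\<^sup>2"] algebra_simps)
  moreover have "(norm (K x))\<^sup>2 > 0"
    using False by simp
  ultimately show ?thesis
    using mult_right_le_imp_le by blast
qed

lemma norm_shift_sq:
  "(norm (\<eta> *\<^sub>R u - K u))\<^sup>2 = \<eta>\<^sup>2 * (norm u)\<^sup>2 - 2 * \<eta> * rinner (K u) u + (norm (K u))\<^sup>2"
  unfolding norm_diff_sq[of "\<eta> *\<^sub>R u"]
  by (simp add: rinner_scaleR_left rinner_commute[of u "K u"] power_mult_distrib)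

lemma norm_shift_le:
  assumes K: "bounded_clinear_op K" and P: "positive_op K" and \<eta>: "onorm K \<le> 2 * \<eta>"
  shows "norm (\<eta> *\<^sub>R u - K u) \<le> \<eta> * norm u"
proof -
  have "\<eta> \<ge> 0"
    using \<eta> onorm_pos_le[OF bounded_clinear_op_imp_bounded_linear[OF K]] by simp
  have "(norm (K u))\<^sup>2 \<le> onorm K * rinner (K u) u"
    by (rule positive_op_norm_sq_le[OF K P])
  also have "\<dots> \<le> 2 * \<eta> * rinner (K u) u"
    using \<eta> positive_op_rinner_nonneg[OF P] by (intro mult_right_mono) auto
  finally have "(norm (\<eta> *\<^sub>R u - K u))\<^sup>2 \<le> (\<eta> * norm u)\<^sup>2"
    unfolding norm_shift_sq power_mult_distrib by linarith
  then show ?thesis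
    using \<open>\<eta> \<ge> 0\<close> power2_le_imp_le by simp
qed

lemma closed_csubspace_scaleR: "closed_csubspace M \<Longrightarrow> x \<in> M \<Longrightarrow> r *\<^sub>R x \<in> M"
  by (simp add: closed_csubspace_def flip: scaleC_of_real)

lemma closed_csubspace_add: "closed_csubspace M \<Longrightarrow> x \<in> M \<Longrightarrow> y \<in> M \<Longrightarrow> x + y \<in> M"
  by (simp add: closed_csubspace_def)

lemma closed_csubspace_unit_vector:
  assumes "closed_csubspace M" "M \<noteq> {0}"
  obtains z where "z \<in> M" "norm z = 1"
proof -
  obtain x where "x \<in> M" "x \<noteq> 0"
    using assms unfolding closed_csubspace_def by blast
  then show ?thesis
    using that[of "(1 / norm x) *\<^sub>R x"] closed_csubspace_scaleR[OF assms(1)] by simp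
qed

lemma restr_inf_le: "x \<in> M \<Longrightarrow> norm x = 1 \<Longrightarrow> restr_inf T M \<le> norm (T x)"
  unfolding restr_inf_def by (rule cInf_lower) (auto intro: bdd_belowI[of _ 0])

lemma restr_inf_nonneg:
  assumes "closed_csubspace M" "M \<noteq> {0}"
  shows "0 \<le> restr_inf T M"
proof -
  obtain z where "z \<in> M" "norm z = 1"
    using closed_csubspace_unit_vector[OF assms] .
  then show ?thesis
    unfolding restr_inf_def by (intro cInf_greatest) auto
qed

lemma restr_inf_mult_norm_le:
  assumes T: "linear T" and M: "closed_csubspace M" and "x \<in> M"
  shows "restr_inf T M * norm x \<le> norm (T x)"
proof (cases "x = 0")
  case True
  then show ?thesis
    using linear_0[OF T] by simp
next
  case False
  have "restr_inf T M \<le> norm (T ((1 / norm x) *\<^sub>R x))"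
    using False \<open>x \<in> M\<close> by (intro restr_inf_le closed_csubspace_scaleR[OF M]) auto
  with False show ?thesis
    by (simp add: linear_scale[OF T] field_simps)
qed

lemma restr_inf_minimizing_seq:
  assumes "closed_csubspace M" "M \<noteq> {0}"
  obtains x where "\<And>n. x n \<in> M" "\<And>n. norm (x n) = 1"
    "(\<lambda>n. norm (T (x n))) \<longlonglongrightarrow> restr_inf T M"
proof -
  define S where "S = {x \<in> M. norm x = 1}"
  have "S \<noteq> {}"
    using closed_csubspace_unit_vector[OF assms] unfolding S_def by blast
  then have "restr_inf T M \<in> closure ((\<lambda>x. norm (T x)) ` S)"
    unfolding restr_inf_def S_def by (intro closure_contains_Inf) (auto intro: bdd_belowI[of _ 0])
  then obtain v where v: "\<And>n. v n \<in> (\<lambda>x. norm (T x)) ` S" "v \<longlonglongrightarrow> restr_inf T M"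
    unfolding closure_sequential by blast
  then have "\<forall>n. \<exists>x. x \<in> S \<and> v n = norm (T x)"
    by blast
  then obtain x where x: "\<And>n. x n \<in> S" "\<And>n. v n = norm (T (x n))"
    by metis
  show ?thesis
  proof
    show "x n \<in> M" "norm (x n) = 1" for n
      using x(1)[of n] by (auto simp: S_def)
    show "(\<lambda>n. norm (T (x n))) \<longlonglongrightarrow> restr_inf T M"
      using v(2) by (simp flip: x(2))
  qed
qed

lemma parallelogram_lower_bound_diff:
  fixes W :: "'a::chilbert \<Rightarrow> 'a"
  assumes W: "linear W" and u: "norm u = 1" and v: "norm v = 1" and "0 \<le> m"
    and lower: "m * norm (u + v) \<le> norm (W (u + v))"
  shows "(norm (W (u - v)))\<^sup>2 - m\<^sup>2 * (norm (u - v))\<^sup>2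
    \<le> 2 * ((norm (W u))\<^sup>2 - m\<^sup>2) + 2 * ((norm (W v))\<^sup>2 - m\<^sup>2)"
proof -
  have "m\<^sup>2 * (norm (u + v))\<^sup>2 \<le> (norm (W (u + v)))\<^sup>2"
    using lower \<open>0 \<le> m\<close> by (metis power_mono power_mult_distrib mult_nonneg_nonneg norm_ge_zero)
  moreover have "(norm (u + v))\<^sup>2 = 4 - (norm (u - v))\<^sup>2"
    using parallelogram_law[of u v] u v by simp
  ultimately have "4 * m\<^sup>2 - m\<^sup>2 * (norm (u - v))\<^sup>2 \<le> (norm (W (u + v)))\<^sup>2"
    by (simp add: right_diff_distrib)
  moreover have "(norm (W (u + v)))\<^sup>2 + (norm (W (u - v)))\<^sup>2 = 2 * (norm (W u))\<^sup>2 + 2 * (norm (W v))\<^sup>2"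
    using parallelogram_law[of "W u" "W v"] by (simp add: linear_add[OF W] linear_diff[OF W])
  ultimately show ?thesis
    by (simp add: algebra_simps)
qed

lemma norm_diff_unit_shift_estimate:
  assumes K: "bounded_clinear_op K" and u: "norm u = 1" and v: "norm v = 1"
    and "0 \<le> m" and "0 \<le> \<eta>"
    and lower: "m * norm (u + v) \<le> norm (\<eta> *\<^sub>R (u + v) - K (u + v))"
  shows "(\<eta>\<^sup>2 - m\<^sup>2) * (norm (u - v))\<^sup>2
    \<le> 2 * ((norm (\<eta> *\<^sub>R u - K u))\<^sup>2 - m\<^sup>2) + 2 * ((norm (\<eta> *\<^sub>R v - K v))\<^sup>2 - m\<^sup>2)
      + 4 * \<eta> * norm (K u - K v)"
proof -
  have KL: "bounded_linear K"
    by (rule bounded_clinear_op_imp_bounded_linear[OF K])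
  have "linear (\<lambda>x. \<eta> *\<^sub>R x - K x)"
    by (intro bounded_linear.linear bounded_linear_sub bounded_linear_scaleR_right KL)
  from parallelogram_lower_bound_diff[OF this u v \<open>0 \<le> m\<close> lower]
  have para: "(norm (\<eta> *\<^sub>R (u - v) - K (u - v)))\<^sup>2 - m\<^sup>2 * (norm (u - v))\<^sup>2
      \<le> 2 * ((norm (\<eta> *\<^sub>R u - K u))\<^sup>2 - m\<^sup>2) + 2 * ((norm (\<eta> *\<^sub>R v - K v))\<^sup>2 - m\<^sup>2)" .
  have "norm (u - v) \<le> 2"
    using norm_triangle_ineq4[of u v] u v by simp
  then have "norm (K (u - v)) * norm (u - v) \<le> 2 * norm (K (u - v))"
    using mult_right_mono[of "norm (u - v)" 2 "norm (K (u - v))"] by (simp add: mult.commute)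
  then have "rinner (K (u - v)) (u - v) \<le> 2 * norm (K (u - v))"
    using rinner_cauchy_schwarz[of "K (u - v)" "u - v"] by linarith
  then have "\<eta> * rinner (K (u - v)) (u - v) \<le> \<eta> * (2 * norm (K (u - v)))"
    using \<open>0 \<le> \<eta>\<close> by (rule mult_left_mono)
  moreover note norm_shift_sq[of \<eta> "u - v" K] para zero_le_power2[of "norm (K (u - v))"]
  ultimately show ?thesis
    unfolding left_diff_distrib linear_diff[OF bounded_linear.linear[OF KL], symmetric] by linarith
qed

lemma Cauchy_if_sq_dist_le:
  fixes y :: "nat \<Rightarrow> 'a::metric_space"
  assumes "0 < c" and g: "g \<longlonglongrightarrow> 0" and bound: "\<And>n k. c * (dist (y n) (y k))\<^sup>2 \<le> g n + g k"
  shows "Cauchy y"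
proof (rule metric_CauchyI)
  fix e :: real
  assume "0 < e"
  with \<open>0 < c\<close> have "0 < c * e\<^sup>2 / 2"
    by simp
  with g obtain N where N: "\<And>n. n \<ge> N \<Longrightarrow> norm (g n) < c * e\<^sup>2 / 2"
    by (metis LIMSEQ_D diff_zero)
  have "dist (y n) (y k) < e" if "n \<ge> N" "k \<ge> N" for n k
  proof -
    have "g n < c * e\<^sup>2 / 2" "g k < c * e\<^sup>2 / 2"
      using N[OF \<open>n \<ge> N\<close>] N[OF \<open>k \<ge> N\<close>] by auto
    with bound[of n k] have "c * (dist (y n) (y k))\<^sup>2 < c * e\<^sup>2"
      by linarith
    with \<open>0 < c\<close> have "(dist (y n) (y k))\<^sup>2 < e\<^sup>2"
      by simp
    with \<open>0 < e\<close> show ?thesis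
      using power_less_imp_less_base[of "dist (y n) (y k)" 2 e] by simp
  qed
  then show "\<exists>N. \<forall>n\<ge>N. \<forall>k\<ge>N. dist (y n) (y k) < e"
    by blast
qed

lemma minimizing_seq_has_Cauchy_subseq:
  assumes K: "bounded_clinear_op K" and C: "compact_op K"
    and "0 \<le> m" and "m < \<eta>"
    and lower: "\<And>n k. m * norm (x n + x k) \<le> norm (\<eta> *\<^sub>R (x n + x k) - K (x n + x k))"
    and unit: "\<And>n. norm (x n) = 1"
    and lim: "(\<lambda>n. norm (\<eta> *\<^sub>R x n - K (x n))) \<longlonglongrightarrow> m"
  obtains r where "strict_mono r" "Cauchy (x \<circ> r)"
proof -
  have "\<forall>n. K (x n) \<in> closure (K ` {x. norm x \<le> 1})"
    using unit by (auto intro: closure_subset[THEN subsetD])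
  then obtain l r where r: "strict_mono r" and Kl: "((\<lambda>n. K (x n)) \<circ> r) \<longlonglongrightarrow> l"
    using seq_compactE[OF compact_imp_seq_compact] C unfolding compact_op_def by metis
  define g where "g n = 2 * ((norm (\<eta> *\<^sub>R x (r n) - K (x (r n))))\<^sup>2 - m\<^sup>2)
    + 4 * \<eta> * norm (K (x (r n)) - l)" for n
  have "g \<longlonglongrightarrow> 2 * (m\<^sup>2 - m\<^sup>2) + 4 * \<eta> * norm (l - l)"
    unfolding g_def using LIMSEQ_subseq_LIMSEQ[OF lim r] Kl
    by (intro tendsto_intros) (auto simp: o_def)
  then have g: "g \<longlonglongrightarrow> 0"
    by simp
  have "(\<eta>\<^sup>2 - m\<^sup>2) * (dist ((x \<circ> r) n) ((x \<circ> r) k))\<^sup>2 \<le> g n + g k" for n k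
  proof -
    have "norm (K (x (r n)) - K (x (r k))) \<le> norm (K (x (r n)) - l) + norm (K (x (r k)) - l)"
      using dist_triangle2[of "K (x (r n))" "K (x (r k))" l] by (simp add: dist_norm)
    then have "4 * \<eta> * norm (K (x (r n)) - K (x (r k)))
        \<le> 4 * \<eta> * norm (K (x (r n)) - l) + 4 * \<eta> * norm (K (x (r k)) - l)"
      using \<open>0 \<le> m\<close> \<open>m < \<eta>\<close> by (simp flip: distrib_left)
    with norm_diff_unit_shift_estimate[OF K unit unit \<open>0 \<le> m\<close> _ lower, of "r n" "r k"] \<open>0 \<le> m\<close> \<open>m < \<eta>\<close>
    show ?thesis
      by (simp add: g_def dist_norm)
  qed
  moreover have "0 < \<eta>\<^sup>2 - m\<^sup>2"
    using \<open>0 \<le> m\<close> \<open>m < \<eta>\<close> by (simp add: power_strict_mono)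
  ultimately have "Cauchy (x \<circ> r)"
    using Cauchy_if_sq_dist_le g by blast
  with r show ?thesis
    using that by blast
qed

lemma N_star_shift_if_restr_inf_less:
  assumes K: "bounded_clinear_op K" and C: "compact_op K"
    and M: "closed_csubspace M" "M \<noteq> {0}"
    and below: "restr_inf (\<lambda>x. \<eta> *\<^sub>R x - K x) M < \<eta>"
  shows "N_star (\<lambda>x. \<eta> *\<^sub>R x - K x) M"
proof -
  define W where "W x = \<eta> *\<^sub>R x - K x" for x
  define m where "m = restr_inf W M"
  have W: "bounded_linear W"
    unfolding W_def[abs_def]
    by (intro bounded_linear_sub bounded_linear_scaleR_right bounded_clinear_op_imp_bounded_linear[OF K])
  have "0 \<le> m" "m < \<eta>"
    using restr_inf_nonneg[OF M] below by (auto simp: m_def W_def[abs_def])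
  obtain x where xM: "\<And>n. x n \<in> M" and unit: "\<And>n. norm (x n) = 1"
    and lim: "(\<lambda>n. norm (W (x n))) \<longlonglongrightarrow> m"
    using restr_inf_minimizing_seq[OF M] unfolding m_def by blast
  have "m * norm (x n + x k) \<le> norm (W (x n + x k))" for n k
    using restr_inf_mult_norm_le[OF bounded_linear.linear[OF W] M(1) closed_csubspace_add[OF M(1) xM xM]]
    by (simp add: m_def)
  then have lower: "m * norm (x n + x k) \<le> norm (\<eta> *\<^sub>R (x n + x k) - K (x n + x k))" for n k
    by (simp add: W_def)
  have lim': "(\<lambda>n. norm (\<eta> *\<^sub>R x n - K (x n))) \<longlonglongrightarrow> m"
    using lim by (simp add: W_def)
  obtain r where r: "strict_mono r" and "Cauchy (x \<circ> r)"
    using minimizing_seq_has_Cauchy_subseq[OF K C \<open>0 \<le> m\<close> \<open>m < \<eta>\<close> lower unit lim'] .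
  then obtain x0 where x0: "(x \<circ> r) \<longlonglongrightarrow> x0"
    using Cauchy_convergent_iff convergent_def by blast
  have "x0 \<in> M"
    using M(1) xM by (intro closed_sequentially[OF _ _ x0]) (auto simp: closed_csubspace_def)
  moreover have "norm x0 = 1"
    using tendsto_norm[OF x0] unit LIMSEQ_unique[OF _ tendsto_const] by (simp add: o_def)
  moreover have "norm (W x0) = m"
    using tendsto_norm[OF bounded_linear.tendsto[OF W x0]] LIMSEQ_subseq_LIMSEQ[OF lim r]
    by (simp add: o_def LIMSEQ_unique)
  ultimately show ?thesis
    unfolding N_star_def m_def W_def[abs_def] by blast
qed

theorem lemma3p11:
  fixes K :: "'a::chilbert \<Rightarrow> 'a" and \<eta> :: real
  assumes "bounded_clinear_op K"
    and "positive_op K"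
    and "compact_op K"
    and "\<eta> > 0"
    and "\<eta> > onorm K / 2"
  shows "AN_star (\<lambda>x. \<eta> *\<^sub>R x - K x)"
  unfolding AN_star_def
proof (intro allI impI, elim conjE)
  fix M :: "'a set"
  assume M: "closed_csubspace M" "M \<noteq> {0}"
  obtain z where z: "z \<in> M" "norm z = 1"
    using closed_csubspace_unit_vector[OF M] .
  have "norm (\<eta> *\<^sub>R z - K z) \<le> \<eta>"
    using norm_shift_le[OF assms(1,2), of \<eta> z] assms(5) z(2) by simp
  show "N_star (\<lambda>x. \<eta> *\<^sub>R x - K x) M"
  proof (cases "restr_inf (\<lambda>x. \<eta> *\<^sub>R x - K x) M < \<eta>")
    case True
    then show ?thesis
      by (rule N_star_shift_if_restr_inf_less[OF assms(1,3) M])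
  next
    case False
    text \<open>Then every unit vector of \<open>M\<close> is a minimiser, since \<open>\<parallel>\<eta> z - K z\<parallel> \<le> \<eta>\<close>.\<close>
    with z restr_inf_le[OF z, of "\<lambda>x. \<eta> *\<^sub>R x - K x"] \<open>norm (\<eta> *\<^sub>R z - K z) \<le> \<eta>\<close>
    show ?thesis
      unfolding N_star_def by (intro bexI[of _ z]) auto
  qed
qed

end
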